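(* Let $\mathcal G$ be a $\sigma$-compact locally compact Hausdorff étale groupoid which is minimal. Then $\mathcal G$ is fiberwise amenable if and only if it is ubiquitously fiberwise amenable.
   Context: $AB=\{xy:x\in A,y\in B,s(x)=r(y)\}$, $Lu=\{x\in L:s(x)=u\}$. For $K,F\subseteq\mathcal G$: $\partial_KF=(KF\setminus F)\cup\{x\in F:yx\notin F\text{ for some }y\in K\text{ with }s(y)=r(x)\}$; a finite nonempty $F$ is $(K,\varepsilon)$-Følner if $|\partial_KF|\le\varepsilon|F|$. $\mathcal G$ is fiberwise amenable if for every compact $K\subseteq\mathcal G$ and $\varepsilon>0$ a $(K,\varepsilon)$-Følner set exists; it is ubiquitously fiberwise amenable if for every compact $K$ and $\varepsilon>0$ there is a compact $L\subseteq\mathcal G$ such that for every $u\in\mathcal G^{(0)}$ there is a $(K,\varepsilon)$-Følner set contained in $Lu\cup\{u\}$. Minimal: the only closed $D\subseteq\mathcal G^{(0)}$ with $r(\{x:s(x)\in D\})=D$ are $\emptyset$ and $\mathcal G^{(0)}$. *)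

theory Defs
  imports "HOL-Analysis.Analysis"
begin

text \<open>A groupoid is modelled on a whole type 'g (the arrows), with a set of composable
pairs G2 (= G^(2)), a multiplication gm (meaningful on G2) and an inverse gi,
satisfying Renault's axioms.\<close>

definition grd_r :: "('g \<Rightarrow> 'g \<Rightarrow> 'g) \<Rightarrow> ('g \<Rightarrow> 'g) \<Rightarrow> 'g \<Rightarrow> 'g" where
  "grd_r gm gi x = gm x (gi x)"

definition grd_s :: "('g \<Rightarrow> 'g \<Rightarrow> 'g) \<Rightarrow> ('g \<Rightarrow> 'g) \<Rightarrow> 'g \<Rightarrow> 'g" where
  "grd_s gm gi x = gm (gi x) x"

definition units :: "('g \<Rightarrow> 'g \<Rightarrow> 'g) \<Rightarrow> ('g \<Rightarrow> 'g) \<Rightarrow> 'g set" where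
  "units gm gi = range (grd_r gm gi)"

definition groupoid :: "('g \<times> 'g) set \<Rightarrow> ('g \<Rightarrow> 'g \<Rightarrow> 'g) \<Rightarrow> ('g \<Rightarrow> 'g) \<Rightarrow> bool" where
  "groupoid G2 gm gi \<longleftrightarrow>
     (\<forall>x. gi (gi x) = x) \<and>
     (\<forall>x y z. (x, y) \<in> G2 \<and> (y, z) \<in> G2 \<longrightarrow>
        (gm x y, z) \<in> G2 \<and> (x, gm y z) \<in> G2 \<and> gm (gm x y) z = gm x (gm y z)) \<and>
     (\<forall>x. (gi x, x) \<in> G2) \<and> (\<forall>x y. (x, y) \<in> G2 \<longrightarrow> gm (gi x) (gm x y) = y) \<and>
     (\<forall>x. (x, gi x) \<in> G2) \<and> (\<forall>x z. (z, x) \<in> G2 \<longrightarrow> gm (gm z x) (gi x) = z)"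

definition etale_groupoid ::
  "('g::topological_space \<times> 'g) set \<Rightarrow> ('g \<Rightarrow> 'g \<Rightarrow> 'g) \<Rightarrow> ('g \<Rightarrow> 'g) \<Rightarrow> bool" where
  "etale_groupoid G2 gm gi \<longleftrightarrow>
     groupoid G2 gm gi \<and>
     continuous_on G2 (\<lambda>p. gm (fst p) (snd p)) \<and>
     continuous_on UNIV gi \<and>
     (\<forall>x. \<exists>U. open U \<and> x \<in> U \<and> open (grd_r gm gi ` U) \<and> inj_on (grd_r gm gi) U \<and>
            continuous_on U (grd_r gm gi) \<and>
            continuous_on (grd_r gm gi ` U) (inv_into U (grd_r gm gi)))"

definition locally_compact_type :: "'g::topological_space itself \<Rightarrow> bool" where
  "locally_compact_type _ \<longleftrightarrow> (\<forall>x::'g. \<exists>U K. open U \<and> compact K \<and> x \<in> U \<and> U \<subseteq> K)"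

definition sigma_compact_type :: "'g::topological_space itself \<Rightarrow> bool" where
  "sigma_compact_type _ \<longleftrightarrow> (\<exists>K :: nat \<Rightarrow> 'g set. (\<forall>n. compact (K n)) \<and> (\<Union>n. K n) = UNIV)"

definition setprod :: "('g \<Rightarrow> 'g \<Rightarrow> 'g) \<Rightarrow> ('g \<Rightarrow> 'g) \<Rightarrow> 'g set \<Rightarrow> 'g set \<Rightarrow> 'g set" where
  "setprod gm gi A B =
     {gm x y | x y. x \<in> A \<and> y \<in> B \<and> grd_s gm gi x = grd_r gm gi y}"

definition bdry :: "('g \<Rightarrow> 'g \<Rightarrow> 'g) \<Rightarrow> ('g \<Rightarrow> 'g) \<Rightarrow> 'g set \<Rightarrow> 'g set \<Rightarrow> 'g set" where
  "bdry gm gi K F = (setprod gm gi K F - F) \<union>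
     {x \<in> F. \<exists>y \<in> K. grd_s gm gi y = grd_r gm gi x \<and> gm y x \<notin> F}"

definition folner :: "('g \<Rightarrow> 'g \<Rightarrow> 'g) \<Rightarrow> ('g \<Rightarrow> 'g) \<Rightarrow> 'g set \<Rightarrow> real \<Rightarrow> 'g set \<Rightarrow> bool" where
  "folner gm gi K \<epsilon> F \<longleftrightarrow> finite F \<and> F \<noteq> {} \<and>
     real (card (bdry gm gi K F)) \<le> \<epsilon> * real (card F)"

definition fiberwise_amenable :: "('g::topological_space \<Rightarrow> 'g \<Rightarrow> 'g) \<Rightarrow> ('g \<Rightarrow> 'g) \<Rightarrow> bool" where
  "fiberwise_amenable gm gi \<longleftrightarrow>
     (\<forall>K \<epsilon>. compact K \<and> \<epsilon> > 0 \<longrightarrow> (\<exists>F. folner gm gi K \<epsilon> F))"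

definition ubiq_fiberwise_amenable :: "('g::topological_space \<Rightarrow> 'g \<Rightarrow> 'g) \<Rightarrow> ('g \<Rightarrow> 'g) \<Rightarrow> bool" where
  "ubiq_fiberwise_amenable gm gi \<longleftrightarrow>
     (\<forall>K \<epsilon>. compact K \<and> \<epsilon> > 0 \<longrightarrow>
        (\<exists>L. compact L \<and> (\<forall>u \<in> units gm gi.
           \<exists>F. F \<subseteq> {x \<in> L. grd_s gm gi x = u} \<union> {u} \<and> folner gm gi K \<epsilon> F)))"

definition minimal_groupoid :: "('g::topological_space \<Rightarrow> 'g \<Rightarrow> 'g) \<Rightarrow> ('g \<Rightarrow> 'g) \<Rightarrow> bool" where
  "minimal_groupoid gm gi \<longleftrightarrow>
     (\<forall>D. closedin (top_of_set (units gm gi)) D \<and>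
          grd_r gm gi ` {x. grd_s gm gi x \<in> D} = D \<longrightarrow> D = {} \<or> D = units gm gi)"

end

theory Submission
  imports Defs
begin

text \<open>
  Ubiquitous fiberwise amenability implies fiberwise amenability because the unit space is
  nonempty.  Conversely, fix a compact \<open>K\<close> and a Folner set, which may be taken inside a
  single source fiber over a unit \<open>v\<close>.  Cover \<open>K\<close> by \<open>n\<close> compact pieces of open bisections
  and move the Folner set to nearby fibers along local sections of \<open>s\<close> through its points.
  For \<open>w\<close> close to \<open>v\<close>, every boundary point of the moved set comes from a point that one of
  the pieces pushes out of the original set, so the Folner constant grows at most by the
  factor \<open>n + 1\<close>, and all moved sets stay in one compact set \<open>L\<^sub>0\<close>.  By minimality every
  unit \<open>u\<close> is the source of an arrow \<open>g\<close> whose range lies in this neighbourhood of \<open>v\<close>;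
  compactness of \<open>s(K)\<close> lets us take all these \<open>g\<close> from one compact set \<open>C\<close>, and right
  translation by \<open>g\<close> carries a Folner set in the fiber over \<open>r g\<close> into \<open>L\<^sub>0 C\<close>, in the
  fiber over \<open>u\<close>.  Units outside \<open>s(K)\<close> have the Folner set \<open>{u}\<close>.
\<close>

lemma Hausdorff_space_euclidean_t2: "Hausdorff_space (euclidean :: 'a::t2_space topology)"
  unfolding Hausdorff_space_def using hausdorff by (auto simp: disjnt_def)

lemma compact_neighbourhood_base:
  fixes x :: "'a::t2_space"
  assumes "locally_compact_type TYPE('a)" "open W" "x \<in> W"
  shows "\<exists>U C. open U \<and> compact C \<and> x \<in> U \<and> U \<subseteq> C \<and> C \<subseteq> W"
proof -
  have "locally_compact_space (euclidean :: 'a topology)"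
    using assms(1) unfolding locally_compact_type_def locally_compact_space_def
    by (metis open_openin compactin_euclidean_iff)
  hence "neighbourhood_base_of (compactin euclidean) (euclidean :: 'a topology)"
    using locally_compact_space_neighbourhood_base Hausdorff_space_euclidean_t2 by blast
  thus ?thesis
    using assms(2,3) unfolding neighbourhood_base_of by (metis open_openin compactin_euclidean_iff)
qed

lemma compact_nbhds_within:
  fixes W :: "'a::t2_space \<Rightarrow> 'a set"
  assumes "locally_compact_type TYPE('a)" "\<And>x. open (W x)" "\<And>x. x \<in> W x"
  shows "\<exists>C. \<forall>x. compact (C x) \<and> x \<in> interior (C x) \<and> C x \<subseteq> W x"
proof -
  have "\<exists>C. compact C \<and> x \<in> interior C \<and> C \<subseteq> W x" for x
  proof -
    from compact_neighbourhood_base[OF assms(1) assms(2)[of x] assms(3)[of x]]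
    obtain N C where NC: "open N" "compact C" "x \<in> N" "N \<subseteq> C" "C \<subseteq> W x"
      by blast
    thus ?thesis using interior_maximal[OF NC(4,1)] by blast
  qed
  hence "\<forall>x. \<exists>C. compact C \<and> x \<in> interior C \<and> C \<subseteq> W x" by blast
  from choice[OF this] show ?thesis .
qed

lemma open_image_involution:
  assumes "continuous_on UNIV f" "\<And>x. f (f x) = x" "open U"
  shows "open (f ` U)"
proof -
  have "f ` U = f -` U"
  proof
    show "f -` U \<subseteq> f ` U"
      using assms(2) by (metis image_eqI subsetI vimageE)
  qed (use assms(2) in auto)
  thus ?thesis using assms(1,3) by (simp add: open_vimage)
qed

lemma eventually_inj_on_finite:
  fixes \<phi> :: "'a::t2_space \<Rightarrow> 'b \<Rightarrow> 'a"
  assumes "finite F" "\<And>f. f \<in> F \<Longrightarrow> ((\<lambda>w. \<phi> f w) \<longlongrightarrow> f) net"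
  shows "\<forall>\<^sub>F w in net. inj_on (\<lambda>f. \<phi> f w) F"
proof -
  have separate: "\<forall>\<^sub>F w in net. \<phi> f w \<noteq> \<phi> g w" if fg: "f \<in> F" "g \<in> F" "f \<noteq> g" for f g
  proof -
    obtain A B where AB: "open A" "open B" "f \<in> A" "g \<in> B" "A \<inter> B = {}"
      using hausdorff[OF fg(3)] by blast
    have "\<forall>\<^sub>F w in net. \<phi> f w \<in> A"
      using topological_tendstoD[OF assms(2)[OF fg(1)] AB(1,3)] .
    moreover have "\<forall>\<^sub>F w in net. \<phi> g w \<in> B"
      using topological_tendstoD[OF assms(2)[OF fg(2)] AB(2,4)] .
    ultimately show ?thesis
      by eventually_elim (use AB(5) in auto)
  qed
  have "\<forall>\<^sub>F w in net. \<forall>fg\<in>F \<times> F. fst fg \<noteq> snd fg \<longrightarrow> \<phi> (fst fg) w \<noteq> \<phi> (snd fg) w"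
  proof (rule eventually_ball_finite, use assms(1) in simp, intro ballI)
    fix fg assume fg: "fg \<in> F \<times> F"
    show "\<forall>\<^sub>F w in net. fst fg \<noteq> snd fg \<longrightarrow> \<phi> (fst fg) w \<noteq> \<phi> (snd fg) w"
    proof (cases "fst fg = snd fg")
      case False
      with fg show ?thesis
        using separate[of "fst fg" "snd fg"] by (auto elim: eventually_mono)
    qed simp
  qed
  thus ?thesis
    by eventually_elim (auto simp: inj_on_def)
qed

locale grpd =
  fixes G2 :: "('g \<times> 'g) set" and gm :: "'g \<Rightarrow> 'g \<Rightarrow> 'g" and gi :: "'g \<Rightarrow> 'g"
  assumes groupoid: "groupoid G2 gm gi"
begin

abbreviation r where "r \<equiv> grd_r gm gi"
abbreviation s where "s \<equiv> grd_s gm gi"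

lemma inv_inv [simp]: "gi (gi x) = x"
  using groupoid unfolding groupoid_def by blast

lemma assoc_G2:
  "(x, y) \<in> G2 \<Longrightarrow> (y, z) \<in> G2 \<Longrightarrow>
   (gm x y, z) \<in> G2 \<and> (x, gm y z) \<in> G2 \<and> gm (gm x y) z = gm x (gm y z)"
  using groupoid unfolding groupoid_def by blast

lemma inv_left_G2 [simp]: "(gi x, x) \<in> G2"
  and inv_right_G2 [simp]: "(x, gi x) \<in> G2"
  using groupoid unfolding groupoid_def by blast+

lemma inv_mult_cancel_left: "(x, y) \<in> G2 \<Longrightarrow> gm (gi x) (gm x y) = y"
  and mult_inv_cancel_right: "(z, x) \<in> G2 \<Longrightarrow> gm (gm z x) (gi x) = z"
  using groupoid unfolding groupoid_def by blast+

lemma s_eq_r_inv: "s x = r (gi x)"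
  by (simp add: grd_s_def grd_r_def)

lemma r_eq_s_inv: "r x = s (gi x)"
  by (simp add: grd_s_def grd_r_def)

lemma r_mult_self: "gm (r x) x = x" and r_self_G2: "(r x, x) \<in> G2"
  using mult_inv_cancel_right[of x "gi x"] assoc_G2[of x "gi x" x] by (simp_all add: grd_r_def)

lemma self_s_G2: "(x, s x) \<in> G2"
  using assoc_G2[of x "gi x" x] by (simp add: grd_s_def)

lemma G2_iff: "(x, y) \<in> G2 \<longleftrightarrow> s x = r y"
proof
  assume xy: "(x, y) \<in> G2"
  have sx_y: "(gm (gi x) x, y) \<in> G2 \<and> gm (gm (gi x) x) y = y"
    using assoc_G2[OF inv_left_G2[of x] xy] inv_mult_cancel_left[OF xy] by simp
  hence "gm (gm (gm (gi x) x) y) (gi y) = gm (gi x) x"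
    using mult_inv_cancel_right by blast
  thus "s x = r y" using sx_y by (simp add: grd_s_def grd_r_def)
next
  assume "s x = r y"
  hence "(x, r y) \<in> G2" using self_s_G2[of x] by simp
  from assoc_G2[OF this r_self_G2] show "(x, y) \<in> G2" using r_mult_self by simp
qed

lemma s_mult: "s x = r y \<Longrightarrow> s (gm x y) = s y"
  using assoc_G2[of x y "gi y"] by (simp add: G2_iff r_eq_s_inv)

lemma r_mult: "s x = r y \<Longrightarrow> r (gm x y) = r x"
  using assoc_G2[of "gi x" x y] by (simp add: G2_iff s_eq_r_inv)

lemma mult_assoc: "s x = r y \<Longrightarrow> s y = r z \<Longrightarrow> gm (gm x y) z = gm x (gm y z)"
  using assoc_G2 by (simp add: G2_iff)

lemma mult_right_cancel: "s y = r x \<Longrightarrow> s z = r x \<Longrightarrow> gm y x = gm z x \<Longrightarrow> y = z"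
  by (metis G2_iff mult_inv_cancel_right)

lemma mult_left_cancel: "s x = r y \<Longrightarrow> s x = r z \<Longrightarrow> gm x y = gm x z \<Longrightarrow> y = z"
  by (metis G2_iff inv_mult_cancel_left)

lemma r_r [simp]: "r (r x) = r x"
  using r_mult[of x "gi x"] by (simp add: s_eq_r_inv grd_r_def)

lemma r_s [simp]: "r (s x) = s x"
  using r_r[of "gi x"] by (simp add: s_eq_r_inv)

lemma units_iff: "u \<in> units gm gi \<longleftrightarrow> r u = u"
  unfolding units_def by (metis r_r rangeE rangeI)

lemma s_unit: "u \<in> units gm gi \<Longrightarrow> s u = u"
  by (metis units_iff grd_r_def r_eq_s_inv s_mult s_eq_r_inv)

lemma s_in_units: "s x \<in> units gm gi"
  by (simp add: units_iff)

lemma bdry_subset_fibers: "bdry gm gi K F \<subseteq> {z. s z \<in> s ` F}"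
  unfolding bdry_def setprod_def by (auto simp: s_mult)

lemma bdry_Int_fiber: "bdry gm gi K F \<inter> {x. s x = v} = bdry gm gi K (F \<inter> {x. s x = v})"
  unfolding bdry_def setprod_def by (auto simp: s_mult)

lemma inj_on_mult_right: "inj_on (\<lambda>x. gm x g) {x. s x = r g}"
  by (rule inj_onI) (auto intro: mult_right_cancel)

lemma bdry_mult_right:
  assumes F: "F \<subseteq> {x. s x = r g}"
  shows "bdry gm gi K ((\<lambda>x. gm x g) ` F) = (\<lambda>x. gm x g) ` bdry gm gi K F"
proof -
  have mem: "gm x g \<in> (\<lambda>x. gm x g) ` F \<longleftrightarrow> x \<in> F" if "s x = r g" for x
    using that F mult_right_cancel[of x g] by auto
  have mult_mem: "gm k (gm x g) \<in> (\<lambda>x. gm x g) ` F \<longleftrightarrow> gm k x \<in> F"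
    if "s k = r x" "s x = r g" for k x
    using that mem[of "gm k x"] by (simp add: s_mult mult_assoc)
  show ?thesis
  proof (intro set_eqI iffI)
    fix z assume "z \<in> bdry gm gi K ((\<lambda>x. gm x g) ` F)"
    then consider k x where "k \<in> K" "x \<in> F" "s k = r x" "z = gm k (gm x g)" "gm k x \<notin> F"
      | k x where "x \<in> F" "z = gm x g" "k \<in> K" "s k = r x" "gm k x \<notin> F"
      unfolding bdry_def setprod_def using F mult_mem by (auto simp: r_mult)
    thus "z \<in> (\<lambda>x. gm x g) ` bdry gm gi K F"
    proof cases
      case 1
      hence "z = gm (gm k x) g" "gm k x \<in> bdry gm gi K F"
        using F by (auto simp: mult_assoc bdry_def setprod_def)
      thus ?thesis by blast
    qed (auto simp: bdry_def)
  next
    fix z assume "z \<in> (\<lambda>x. gm x g) ` bdry gm gi K F"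
    then obtain w where w: "w \<in> bdry gm gi K F" "z = gm w g" by auto
    then consider k x where "k \<in> K" "x \<in> F" "s k = r x" "w = gm k x" "w \<notin> F"
      | k where "w \<in> F" "k \<in> K" "s k = r w" "gm k w \<notin> F"
      unfolding bdry_def setprod_def by blast
    thus "z \<in> bdry gm gi K ((\<lambda>x. gm x g) ` F)"
    proof cases
      case 1
      hence "z = gm k (gm x g)" "s k = r (gm x g)" "z \<notin> (\<lambda>x. gm x g) ` F"
        using F w(2) mult_mem[of k x] by (auto simp: mult_assoc r_mult)
      thus ?thesis using 1 unfolding bdry_def setprod_def by blast
    next
      case 2
      hence "s k = r (gm w g)" "gm k (gm w g) \<notin> (\<lambda>x. gm x g) ` F"
          "gm w g \<in> (\<lambda>x. gm x g) ` F"
        using F mult_mem[of k w] by (auto simp: r_mult)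
      thus ?thesis using 2 w(2) unfolding bdry_def by (intro UnI2) auto
    qed
  qed
qed

lemma folner_mult_right:
  assumes F: "F \<subseteq> {x. s x = r g}" and folner: "folner gm gi K \<epsilon> F"
  shows "folner gm gi K \<epsilon> ((\<lambda>x. gm x g) ` F)"
proof -
  have "bdry gm gi K F \<subseteq> {x. s x = r g}"
    using bdry_subset_fibers[of K F] F by force
  hence "card (bdry gm gi K F) = card ((\<lambda>x. gm x g) ` bdry gm gi K F)"
    by (intro card_image[symmetric] inj_on_subset[OF inj_on_mult_right])
  moreover have "card ((\<lambda>x. gm x g) ` F) = card F"
    by (intro card_image inj_on_subset[OF inj_on_mult_right F])
  ultimately show ?thesis
    using folner bdry_mult_right[OF F] by (simp add: folner_def)
qed

lemma folner_Int_fiber: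
  assumes folner: "folner gm gi K \<epsilon> F" and "\<epsilon> \<ge> 0"
  shows "\<exists>v. folner gm gi K \<epsilon> (F \<inter> {x. s x = v})"
proof (rule ccontr)
  assume no_fiber: "\<nexists>v. folner gm gi K \<epsilon> (F \<inter> {x. s x = v})"
  define Fv where "Fv v = F \<inter> {x. s x = v}" for v
  define Bv where "Bv v = bdry gm gi K F \<inter> {x. s x = v}" for v
  have fin: "finite F" "F \<noteq> {}" using folner by (auto simp: folner_def)
  have Bv_eq: "Bv v = bdry gm gi K (Fv v)" for v
    using bdry_Int_fiber by (simp add: Bv_def Fv_def)
  have Fv_ne: "Fv v \<noteq> {}" if "v \<in> s ` F" for v
    using that by (auto simp: Fv_def)
  have big: "real (card (Bv v)) > \<epsilon> * real (card (Fv v))" if "v \<in> s ` F" for v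
    using no_fiber Fv_ne[OF that] fin unfolding folner_def Bv_eq by (auto simp: Fv_def not_le)
  have F_eq: "F = (\<Union>v\<in>s ` F. Fv v)"
    by (auto simp: Fv_def)
  have bdry_eq: "bdry gm gi K F = (\<Union>v\<in>s ` F. Bv v)"
    using bdry_subset_fibers[of K F] by (auto simp: Bv_def)
  show False
  proof (cases "\<forall>v\<in>s ` F. finite (Bv v)")
    case True
    have "card F = (\<Sum>v\<in>s ` F. card (Fv v))"
      by (subst F_eq, rule card_UN_disjoint) (use fin in \<open>auto simp: Fv_def\<close>)
    moreover have "card (bdry gm gi K F) = (\<Sum>v\<in>s ` F. card (Bv v))"
      by (subst bdry_eq, rule card_UN_disjoint) (use fin True in \<open>auto simp: Bv_def\<close>)
    moreover have "(\<Sum>v\<in>s ` F. \<epsilon> * real (card (Fv v))) < (\<Sum>v\<in>s ` F. real (card (Bv v)))"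
      by (rule sum_strict_mono) (use fin big in auto)
    ultimately have "\<epsilon> * real (card F) < real (card (bdry gm gi K F))"
      by (simp add: sum_distrib_left)
    thus False using folner by (auto simp: folner_def)
  next
    case False
    \<comment> \<open>an infinite boundary has \<open>card\<close> 0, so such a fiber is trivially Folner\<close>
    then obtain v where v: "v \<in> s ` F" "infinite (Bv v)" by auto
    hence "folner gm gi K \<epsilon> (Fv v)"
      using Fv_ne[OF v(1)] fin \<open>\<epsilon> \<ge> 0\<close> unfolding folner_def Bv_eq by (auto simp: Fv_def)
    thus False using no_fiber by (auto simp: Fv_def)
  qed
qed

lemma finite_setprod_inj_s:
  assumes "inj_on s B" "finite F"
  shows "finite (setprod gm gi B F)"
proof (rule finite_subset)
  have "inv_into B s (r f) = k" if "k \<in> B" "s k = r f" for k f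
    using that assms(1) by (metis inv_into_f_f)
  thus "setprod gm gi B F \<subseteq> (\<lambda>f. gm (inv_into B s (r f)) f) ` F"
    by (force simp: setprod_def)
qed (use assms(2) in simp)

lemma card_pushed_out_le:
  assumes "inj_on s B" "inj_on r B" "finite (setprod gm gi B F)"
  shows "card {f \<in> F. \<exists>k\<in>B. s k = r f \<and> gm k f \<notin> F} \<le> card (setprod gm gi B F - F)"
proof (rule card_inj_on_le)
  let ?push = "\<lambda>f. gm (inv_into B s (r f)) f"
  have push: "inv_into B s (r f) \<in> B \<and> s (inv_into B s (r f)) = r f \<and> ?push f \<notin> F"
    if pushed: "f \<in> {f \<in> F. \<exists>k\<in>B. s k = r f \<and> gm k f \<notin> F}" for f
  proof -
    obtain k where k: "f \<in> F" "k \<in> B" "s k = r f" "gm k f \<notin> F" using pushed by blast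
    hence "inv_into B s (r f) = k" using assms(1) by (metis inv_into_f_f)
    thus ?thesis using k by simp
  qed
  show "inj_on ?push {f \<in> F. \<exists>k\<in>B. s k = r f \<and> gm k f \<notin> F}"
  proof (rule inj_onI)
    fix f f' assume f: "f \<in> {f \<in> F. \<exists>k\<in>B. s k = r f \<and> gm k f \<notin> F}"
      and f': "f' \<in> {f \<in> F. \<exists>k\<in>B. s k = r f \<and> gm k f \<notin> F}" and eq: "?push f = ?push f'"
    have "r (inv_into B s (r f)) = r (inv_into B s (r f'))"
      using eq push[OF f] push[OF f'] r_mult by metis
    hence "inv_into B s (r f) = inv_into B s (r f')"
      using assms(2) push[OF f] push[OF f'] by (auto dest: inj_onD)
    thus "f = f'"
      using eq push[OF f] push[OF f'] mult_left_cancel by metis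
  qed
  show "?push ` {f \<in> F. \<exists>k\<in>B. s k = r f \<and> gm k f \<notin> F} \<subseteq> setprod gm gi B F - F"
    using push by (auto simp: setprod_def)
qed (use assms(3) in simp)

lemma bdry_image_subset:
  fixes \<psi> :: "'g \<Rightarrow> 'g" and Kj :: "'p \<Rightarrow> 'g set"
  assumes pieces: "\<And>p. p \<in> P \<Longrightarrow> inj_on s (Kj p)"
    and cover: "K \<subseteq> (\<Union>p\<in>P. Kj p)"
    and reflect: "\<And>f p k. f \<in> F \<Longrightarrow> p \<in> P \<Longrightarrow> k \<in> Kj p \<Longrightarrow> s k = r (\<psi> f) \<Longrightarrow> r f \<in> s ` Kj p"
    and keep: "\<And>f p k k0. f \<in> F \<Longrightarrow> p \<in> P \<Longrightarrow> k \<in> Kj p \<Longrightarrow> s k = r (\<psi> f) \<Longrightarrow>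
      k0 \<in> Kj p \<Longrightarrow> s k0 = r f \<Longrightarrow> gm k0 f \<in> F \<Longrightarrow> gm k (\<psi> f) \<in> \<psi> ` F"
  defines "Out p \<equiv> {f \<in> F. \<exists>k\<in>Kj p. s k = r f \<and> gm k f \<notin> F}"
  shows "bdry gm gi K (\<psi> ` F) \<subseteq>
    (\<Union>p\<in>P. (\<lambda>f. gm (inv_into (Kj p) s (r (\<psi> f))) (\<psi> f)) ` Out p) \<union> \<psi> ` (\<Union>p\<in>P. Out p)"
proof -
  have escape: "\<exists>p\<in>P. f \<in> Out p \<and> k = inv_into (Kj p) s (r (\<psi> f))"
    if f: "f \<in> F" and k: "k \<in> K" "s k = r (\<psi> f)" "gm k (\<psi> f) \<notin> \<psi> ` F" for f k
  proof -
    obtain p where p: "p \<in> P" "k \<in> Kj p" using cover k(1) by auto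
    obtain k0 where k0: "k0 \<in> Kj p" "s k0 = r f" using reflect[OF f p k(2)] by auto
    have "gm k0 f \<notin> F" using keep[OF f p k(2) k0] k(3) by blast
    hence "f \<in> Out p" using f k0 by (auto simp: Out_def)
    moreover have "k = inv_into (Kj p) s (r (\<psi> f))"
      using k(2) p pieces by (metis inv_into_f_f)
    ultimately show ?thesis using p(1) by blast
  qed
  show ?thesis
  proof
    fix z assume "z \<in> bdry gm gi K (\<psi> ` F)"
    then consider k f where "f \<in> F" "k \<in> K" "s k = r (\<psi> f)" "z = gm k (\<psi> f)" "z \<notin> \<psi> ` F"
      | k f where "f \<in> F" "z = \<psi> f" "k \<in> K" "s k = r (\<psi> f)" "gm k (\<psi> f) \<notin> \<psi> ` F"
      unfolding bdry_def setprod_def by blast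
    thus "z \<in> (\<Union>p\<in>P. (\<lambda>f. gm (inv_into (Kj p) s (r (\<psi> f))) (\<psi> f)) ` Out p) \<union> \<psi> ` (\<Union>p\<in>P. Out p)"
    proof cases
      case 1
      thus ?thesis using escape[of f k] by blast
    next
      case 2
      thus ?thesis using escape[of f k] by blast
    qed
  qed
qed

text \<open>
  A boundary point of \<open>\<psi> ` F\<close> comes from a point of \<open>F\<close> that some piece \<open>Kj p\<close> pushes out of
  \<open>F\<close>; such points are counted once per piece against the outer boundary \<open>K F - F\<close> and once
  against the inner boundary.
\<close>

lemma card_bdry_image_le:
  fixes \<psi> :: "'g \<Rightarrow> 'g" and Kj :: "'p \<Rightarrow> 'g set"
  assumes "finite P" "finite F" "inj_on \<psi> F"
    and pieces: "\<And>p. p \<in> P \<Longrightarrow> Kj p \<subseteq> K \<and> inj_on s (Kj p) \<and> inj_on r (Kj p)"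
    and cover: "K \<subseteq> (\<Union>p\<in>P. Kj p)"
    and reflect: "\<And>f p k. f \<in> F \<Longrightarrow> p \<in> P \<Longrightarrow> k \<in> Kj p \<Longrightarrow> s k = r (\<psi> f) \<Longrightarrow> r f \<in> s ` Kj p"
    and keep: "\<And>f p k k0. f \<in> F \<Longrightarrow> p \<in> P \<Longrightarrow> k \<in> Kj p \<Longrightarrow> s k = r (\<psi> f) \<Longrightarrow>
      k0 \<in> Kj p \<Longrightarrow> s k0 = r f \<Longrightarrow> gm k0 f \<in> F \<Longrightarrow> gm k (\<psi> f) \<in> \<psi> ` F"
  shows "card (bdry gm gi K (\<psi> ` F)) \<le> (card P + 1) * card (bdry gm gi K F)"
proof -
  define Out where "Out p = {f \<in> F. \<exists>k\<in>Kj p. s k = r f \<and> gm k f \<notin> F}" for p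
  define outer where "outer = setprod gm gi K F - F"
  define inner where "inner = {x \<in> F. \<exists>k\<in>K. s k = r x \<and> gm k x \<notin> F}"
  have inj_s: "\<And>p. p \<in> P \<Longrightarrow> inj_on s (Kj p)"
    using pieces by blast
  have fin_Out: "finite (Out p)" for p
    using assms(2) by (simp add: Out_def)
  have fin_Kj: "finite (setprod gm gi (Kj p) F)" if "p \<in> P" for p
    using finite_setprod_inj_s pieces[OF that] assms(2) by blast
  have "setprod gm gi K F \<subseteq> (\<Union>p\<in>P. setprod gm gi (Kj p) F)"
    using cover by (fastforce simp: setprod_def)
  hence fin_outer: "finite outer"
    unfolding outer_def using assms(1) fin_Kj by (meson finite_Diff finite_UN_I finite_subset)
  have "card (\<Union>p\<in>P. (\<lambda>f. gm (inv_into (Kj p) s (r (\<psi> f))) (\<psi> f)) ` Out p) \<le> (\<Sum>p\<in>P. card (Out p))"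
    by (rule order.trans[OF card_UN_le[OF assms(1)] sum_mono])
       (simp_all add: card_image_le fin_Out)
  also have "\<dots> \<le> (\<Sum>p\<in>P. card outer)"
  proof (rule sum_mono)
    fix p assume p: "p \<in> P"
    have "card (Out p) \<le> card (setprod gm gi (Kj p) F - F)"
      unfolding Out_def using card_pushed_out_le pieces[OF p] fin_Kj[OF p] by blast
    also have "\<dots> \<le> card outer"
      using pieces[OF p] fin_outer unfolding outer_def
      by (intro card_mono) (auto simp: setprod_def)
    finally show "card (Out p) \<le> card outer" .
  qed
  finally have card_moved: "card (\<Union>p\<in>P. (\<lambda>f. gm (inv_into (Kj p) s (r (\<psi> f))) (\<psi> f)) ` Out p)
      \<le> card P * card outer" by simp
  have "(\<Union>p\<in>P. Out p) \<subseteq> inner"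
    using pieces by (auto simp: Out_def inner_def)
  moreover have "finite inner" using assms(2) by (simp add: inner_def)
  ultimately have card_stuck: "card (\<psi> ` (\<Union>p\<in>P. Out p)) \<le> card inner"
    by (meson card_image_le card_mono finite_subset le_trans)
  have card_bdry: "card (bdry gm gi K F) = card outer + card inner"
    unfolding bdry_def outer_def [symmetric] inner_def [symmetric]
    using fin_outer assms(2) by (intro card_Un_disjoint) (auto simp: outer_def inner_def)
  have "bdry gm gi K (\<psi> ` F) \<subseteq>
      (\<Union>p\<in>P. (\<lambda>f. gm (inv_into (Kj p) s (r (\<psi> f))) (\<psi> f)) ` Out p) \<union> \<psi> ` (\<Union>p\<in>P. Out p)"
    using bdry_image_subset[OF inj_s cover reflect keep] unfolding Out_def .
  hence "card (bdry gm gi K (\<psi> ` F)) \<le>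
      card ((\<Union>p\<in>P. (\<lambda>f. gm (inv_into (Kj p) s (r (\<psi> f))) (\<psi> f)) ` Out p) \<union> \<psi> ` (\<Union>p\<in>P. Out p))"
    by (rule card_mono[rotated]) (simp add: assms(1) fin_Out)
  also have "\<dots> \<le> card P * card outer + card inner"
    by (rule order.trans[OF card_Un_le add_mono[OF card_moved card_stuck]])
  also have "\<dots> \<le> (card P + 1) * card (bdry gm gi K F)"
    unfolding card_bdry by (simp add: algebra_simps)
  finally show ?thesis .
qed

lemma folner_image:
  fixes \<psi> :: "'g \<Rightarrow> 'g" and Kj :: "'p \<Rightarrow> 'g set"
  assumes "finite P" "folner gm gi K \<delta> F" "inj_on \<psi> F"
    and pieces: "\<And>p. p \<in> P \<Longrightarrow> Kj p \<subseteq> K \<and> inj_on s (Kj p) \<and> inj_on r (Kj p)"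
    and cover: "K \<subseteq> (\<Union>p\<in>P. Kj p)"
    and reflect: "\<And>f p k. f \<in> F \<Longrightarrow> p \<in> P \<Longrightarrow> k \<in> Kj p \<Longrightarrow> s k = r (\<psi> f) \<Longrightarrow> r f \<in> s ` Kj p"
    and keep: "\<And>f p k k0. f \<in> F \<Longrightarrow> p \<in> P \<Longrightarrow> k \<in> Kj p \<Longrightarrow> s k = r (\<psi> f) \<Longrightarrow>
      k0 \<in> Kj p \<Longrightarrow> s k0 = r f \<Longrightarrow> gm k0 f \<in> F \<Longrightarrow> gm k (\<psi> f) \<in> \<psi> ` F"
  shows "folner gm gi K ((real (card P) + 1) * \<delta>) (\<psi> ` F)"
proof -
  have fin: "finite F" "F \<noteq> {}" and bound: "real (card (bdry gm gi K F)) \<le> \<delta> * real (card F)"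
    using assms(2) by (auto simp: folner_def)
  have "card (bdry gm gi K (\<psi> ` F)) \<le> (card P + 1) * card (bdry gm gi K F)"
    by (rule card_bdry_image_le[OF assms(1) fin(1) assms(3) pieces cover reflect keep])
  hence "real (card (bdry gm gi K (\<psi> ` F))) \<le> (real (card P) + 1) * real (card (bdry gm gi K F))"
    by (metis of_nat_Suc of_nat_le_iff of_nat_mult Suc_eq_plus1 add.commute)
  also have "\<dots> \<le> (real (card P) + 1) * (\<delta> * real (card F))"
    by (rule mult_left_mono[OF bound]) simp
  finally show ?thesis
    using fin card_image[OF assms(3)] by (simp add: folner_def mult.assoc)
qed

end

locale etale_grpd = grpd G2 gm gi for G2 :: "('g::t2_space \<times> 'g) set" and gm gi +
  assumes etale: "etale_groupoid G2 gm gi"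
    and locally_compact: "locally_compact_type TYPE('g)"
begin

lemma continuous_on_mult: "continuous_on G2 (\<lambda>p. gm (fst p) (snd p))"
  and continuous_on_inv: "continuous_on UNIV gi"
  using etale unfolding etale_groupoid_def by blast+

lemma continuous_on_r: "continuous_on UNIV r"
proof -
  have "continuous_on UNIV (\<lambda>x. (\<lambda>p. gm (fst p) (snd p)) ((\<lambda>x. (x, gi x)) x))"
    by (rule continuous_on_compose2[OF continuous_on_mult])
       (auto intro!: continuous_intros continuous_on_inv)
  thus ?thesis by (simp add: grd_r_def[abs_def])
qed

lemma continuous_on_s: "continuous_on UNIV s"
  using continuous_on_compose2[OF continuous_on_r continuous_on_inv] by (simp add: s_eq_r_inv)

lemma tendsto_mult:
  assumes "(a \<longlongrightarrow> a0) net" "(b \<longlongrightarrow> b0) net" "s a0 = r b0" "\<forall>\<^sub>F w in net. s (a w) = r (b w)"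
  shows "((\<lambda>w. gm (a w) (b w)) \<longlongrightarrow> gm a0 b0) net"
  using continuous_on_tendsto_compose[OF continuous_on_mult, of "\<lambda>w. (a w, b w)" "(a0, b0)"]
    assms by (auto intro!: tendsto_Pair simp: G2_iff)

text \<open>Together with injectivity of \<open>r\<close>, this describes an open bisection.\<close>

definition s_slice :: "'g set \<Rightarrow> bool" where
  "s_slice U \<longleftrightarrow> open U \<and> inj_on s U \<and> open (s ` U) \<and> continuous_on (s ` U) (inv_into U s)"

lemma s_slice_open_subset:
  assumes U: "s_slice U" and V: "open V" "V \<subseteq> U"
  shows "s_slice V"
proof -
  have inj: "inj_on s V" using U V(2) inj_on_subset by (auto simp: s_slice_def)
  have inv_eq: "inv_into V s w = inv_into U s w" if "w \<in> s ` V" for w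
    using that U V(2) inj by (auto simp: s_slice_def inv_into_f_f subsetD)
  have "s ` V = s ` U \<inter> inv_into U s -` V"
    using U V(2) by (force simp: s_slice_def inv_into_f_f f_inv_into_f image_iff)
  hence "open (s ` V)"
    using U V(1) by (auto simp: s_slice_def intro: continuous_open_preimage)
  moreover have "continuous_on (s ` V) (inv_into V s)"
    using U V(2) by (simp add: continuous_on_cong[OF refl inv_eq] s_slice_def)
      (meson continuous_on_subset image_mono)
  ultimately show ?thesis using V(1) inj by (simp add: s_slice_def)
qed

lemma bisection_nhd: "\<exists>U. x \<in> U \<and> s_slice U \<and> inj_on r U"
proof -
  obtain U0 where U0: "open U0" "gi x \<in> U0" "open (r ` U0)" "inj_on r U0"
      "continuous_on (r ` U0) (inv_into U0 r)"
    using etale unfolding etale_groupoid_def by blast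
  obtain U2 where U2: "open U2" "x \<in> U2" "inj_on r U2"
    using etale unfolding etale_groupoid_def by blast
  define U1 where "U1 = gi ` U0"
  have s_U1: "s ` U1 = r ` U0"
    by (simp add: U1_def image_image s_eq_r_inv)
  have "inj_on (s \<circ> gi) U0"
    using U0(4) by (simp add: o_def s_eq_r_inv)
  hence inj_U1: "inj_on s U1"
    unfolding U1_def by (rule inj_on_imageI)
  have inv_eq: "inv_into U1 s w = gi (inv_into U0 r w)" if w: "w \<in> r ` U0" for w
  proof -
    obtain z where z: "z \<in> U0" "w = r z" using w by blast
    hence z_U1: "gi z \<in> U1" and s_z: "s (gi z) = w" by (auto simp: U1_def s_eq_r_inv)
    have "inv_into U1 s w = gi z"
      using inv_into_f_f[OF inj_U1 z_U1] unfolding s_z .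
    moreover have "inv_into U0 r w = z"
      using inv_into_f_f[OF U0(4) z(1)] unfolding z(2) .
    ultimately show ?thesis by simp
  qed
  have "continuous_on (r ` U0) (\<lambda>w. gi (inv_into U0 r w))"
    by (rule continuous_on_compose2[OF continuous_on_inv U0(5)]) simp
  hence "continuous_on (s ` U1) (inv_into U1 s)"
    unfolding s_U1 by (rule continuous_on_eq) (simp add: inv_eq)
  moreover have "open U1"
    unfolding U1_def using open_image_involution[OF continuous_on_inv inv_inv U0(1)] .
  ultimately have "s_slice U1"
    using inj_U1 U0(3) s_U1 by (simp add: s_slice_def)
  hence "s_slice (U1 \<inter> U2)"
    using s_slice_open_subset open_Int[OF \<open>open U1\<close> U2(1)] by blast
  moreover have "x \<in> U1 \<inter> U2"
    unfolding U1_def using image_eqI[of x gi "gi x", OF inv_inv[symmetric] U0(2)] U2(2) by blast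
  moreover have "inj_on r (U1 \<inter> U2)"
    using inj_on_subset[OF U2(3)] by blast
  ultimately show ?thesis by blast
qed

lemma open_s_image:
  assumes "open W"
  shows "open (s ` W)"
proof (subst open_subopen, intro ballI)
  fix w assume "w \<in> s ` W"
  then obtain x where x: "x \<in> W" "w = s x" by blast
  obtain U where U: "x \<in> U" "s_slice U" using bisection_nhd by blast
  have "open (U \<inter> W)"
    using U(2) assms by (simp add: s_slice_def open_Int)
  hence "open (s ` (U \<inter> W))"
    using s_slice_open_subset[OF U(2)] by (simp add: s_slice_def)
  moreover have "w \<in> s ` (U \<inter> W)" using U(1) x by blast
  ultimately show "\<exists>T. open T \<and> w \<in> T \<and> T \<subseteq> s ` W" by blast
qed

lemma tendsto_s_slice_inv:
  assumes "s_slice U" "x \<in> U"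
  shows "(inv_into U s \<longlongrightarrow> x) (nhds (s x))"
    and "\<forall>\<^sub>F w in nhds (s x). w \<in> s ` U \<and> s (inv_into U s w) = w"
proof -
  have ev: "\<forall>\<^sub>F w in nhds (s x). w \<in> s ` U"
    using assms by (intro eventually_nhds_in_open) (auto simp: s_slice_def)
  thus "\<forall>\<^sub>F w in nhds (s x). w \<in> s ` U \<and> s (inv_into U s w) = w"
    by eventually_elim (simp add: f_inv_into_f)
  have "((\<lambda>w. inv_into U s w) \<longlongrightarrow> inv_into U s (s x)) (nhds (s x))"
    by (rule continuous_on_tendsto_compose[of "s ` U" "inv_into U s" "\<lambda>w. w"])
       (use assms ev in \<open>auto simp: s_slice_def filterlim_ident\<close>)
  thus "(inv_into U s \<longlongrightarrow> x) (nhds (s x))"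
    using assms by (simp add: s_slice_def inv_into_f_f)
qed

lemma eventually_mult_s_slice_inv:
  assumes B: "s_slice B" "k \<in> B" "s k = r f"
    and U: "s_slice U" "f \<in> U" and U': "s_slice U'" "gm k f \<in> U'"
  shows "\<forall>\<^sub>F w in nhds (s f).
    gm (inv_into B s (r (inv_into U s w))) (inv_into U s w) = inv_into U' s w"
proof -
  let ?\<phi> = "inv_into U s" and ?\<sigma> = "inv_into B s"
  have t\<phi>: "(?\<phi> \<longlongrightarrow> f) (nhds (s f))"
    using tendsto_s_slice_inv(1)[OF U] .
  have ev\<phi>: "\<forall>\<^sub>F w in nhds (s f). s (?\<phi> w) = w"
    using tendsto_s_slice_inv(2)[OF U] by (rule eventually_mono) simp
  have tr: "((\<lambda>w. r (?\<phi> w)) \<longlongrightarrow> s k) (nhds (s f))"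
    using continuous_on_tendsto_compose[OF continuous_on_r t\<phi>] B(3) by simp
  have evB: "\<forall>\<^sub>F w in nhds (s f). r (?\<phi> w) \<in> s ` B"
    using topological_tendstoD[OF tr] B(1,2) by (simp add: s_slice_def)
  have "((\<lambda>w. ?\<sigma> (r (?\<phi> w))) \<longlongrightarrow> ?\<sigma> (s k)) (nhds (s f))"
    using B(1,2) by (intro continuous_on_tendsto_compose[OF _ tr _ evB]) (auto simp: s_slice_def)
  hence t\<sigma>: "((\<lambda>w. ?\<sigma> (r (?\<phi> w))) \<longlongrightarrow> k) (nhds (s f))"
    using B(1,2) by (simp add: s_slice_def inv_into_f_f)
  have ev\<sigma>: "\<forall>\<^sub>F w in nhds (s f). s (?\<sigma> (r (?\<phi> w))) = r (?\<phi> w)"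
    using evB by eventually_elim (simp add: f_inv_into_f)
  have "((\<lambda>w. gm (?\<sigma> (r (?\<phi> w))) (?\<phi> w)) \<longlongrightarrow> gm k f) (nhds (s f))"
    by (rule tendsto_mult[OF t\<sigma> t\<phi> B(3) ev\<sigma>])
  hence "\<forall>\<^sub>F w in nhds (s f). gm (?\<sigma> (r (?\<phi> w))) (?\<phi> w) \<in> U'"
    using U' by (intro topological_tendstoD) (auto simp: s_slice_def)
  thus ?thesis
    using ev\<sigma> ev\<phi>
  proof eventually_elim
    case (elim w)
    hence "s (gm (?\<sigma> (r (?\<phi> w))) (?\<phi> w)) = w" by (simp add: s_mult)
    thus ?case using elim(1) U'(1) by (metis inv_into_f_f s_slice_def)
  qed
qed

lemma eventually_r_reflects_closed:
  assumes "finite F" "finite P" "\<And>p. p \<in> P \<Longrightarrow> closed (A p)"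
    and "\<And>f. f \<in> F \<Longrightarrow> (\<phi> f \<longlongrightarrow> f) net"
  shows "\<forall>\<^sub>F w in net. \<forall>f\<in>F. \<forall>p\<in>P. r (\<phi> f w) \<in> A p \<longrightarrow> r f \<in> A p"
proof (rule eventually_ball_finite[OF assms(1)], intro ballI eventually_ball_finite[OF assms(2)])
  fix f p assume f: "f \<in> F" and p: "p \<in> P"
  show "\<forall>\<^sub>F w in net. r (\<phi> f w) \<in> A p \<longrightarrow> r f \<in> A p"
  proof (cases "r f \<in> A p")
    case False
    have "((\<lambda>w. r (\<phi> f w)) \<longlongrightarrow> r f) net"
      using continuous_on_tendsto_compose[OF continuous_on_r assms(4)[OF f]] by simp
    hence "\<forall>\<^sub>F w in net. r (\<phi> f w) \<in> - A p"
      using False assms(3)[OF p] by (intro topological_tendstoD) (simp_all add: open_Compl)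
    thus ?thesis by (rule eventually_mono) simp
  qed simp
qed

lemma eventually_mult_stays_in_image:
  fixes Kj B :: "'p \<Rightarrow> 'g set"
  assumes "finite F" "finite P" "\<And>p. p \<in> P \<Longrightarrow> Kj p \<subseteq> B p \<and> s_slice (B p)"
    and U: "\<And>f. f \<in> F \<Longrightarrow> f \<in> U f \<and> s_slice (U f) \<and> s f = v"
  shows "\<forall>\<^sub>F w in nhds v. \<forall>f\<in>F. \<forall>p\<in>P. (\<exists>k0\<in>Kj p. s k0 = r f \<and> gm k0 f \<in> F) \<longrightarrow>
    (\<forall>k\<in>Kj p. s k = r (inv_into (U f) s w) \<longrightarrow>
      gm k (inv_into (U f) s w) \<in> (\<lambda>f. inv_into (U f) s w) ` F)"
proof (rule eventually_ball_finite[OF assms(1)], intro ballI eventually_ball_finite[OF assms(2)])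
  fix f p assume f: "f \<in> F" and p: "p \<in> P"
  show "\<forall>\<^sub>F w in nhds v. (\<exists>k0\<in>Kj p. s k0 = r f \<and> gm k0 f \<in> F) \<longrightarrow>
    (\<forall>k\<in>Kj p. s k = r (inv_into (U f) s w) \<longrightarrow>
      gm k (inv_into (U f) s w) \<in> (\<lambda>f. inv_into (U f) s w) ` F)"
  proof (cases "\<exists>k0\<in>Kj p. s k0 = r f \<and> gm k0 f \<in> F")
    case True
    then obtain k0 where k0: "k0 \<in> Kj p" "s k0 = r f" "gm k0 f \<in> F" by blast
    have "\<forall>\<^sub>F w in nhds (s f). gm (inv_into (B p) s (r (inv_into (U f) s w))) (inv_into (U f) s w)
        = inv_into (U (gm k0 f)) s w"
      by (rule eventually_mult_s_slice_inv) (use assms(3)[OF p] k0 U f in blast)+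
    hence ev: "\<forall>\<^sub>F w in nhds v. gm (inv_into (B p) s (r (inv_into (U f) s w))) (inv_into (U f) s w)
        = inv_into (U (gm k0 f)) s w"
      using U[OF f] by simp
    show ?thesis
    proof (rule eventually_mono[OF ev], intro impI ballI)
      fix w k assume eq: "gm (inv_into (B p) s (r (inv_into (U f) s w))) (inv_into (U f) s w)
        = inv_into (U (gm k0 f)) s w" and k: "k \<in> Kj p" "s k = r (inv_into (U f) s w)"
      have "inv_into (B p) s (s k) = k"
        using assms(3)[OF p] k(1) by (auto simp: s_slice_def inv_into_f_f)
      hence "gm k (inv_into (U f) s w) = inv_into (U (gm k0 f)) s w"
        using eq k(2) by simp
      thus "gm k (inv_into (U f) s w) \<in> (\<lambda>f. inv_into (U f) s w) ` F"
        using k0(3) by blast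
    qed
  qed auto
qed

lemma eventually_folner_nearby_fibers:
  fixes Kj B :: "'p \<Rightarrow> 'g set"
  assumes P: "finite P"
    and pieces: "\<And>p. p \<in> P \<Longrightarrow>
      Kj p \<subseteq> K \<and> Kj p \<subseteq> B p \<and> s_slice (B p) \<and> inj_on r (B p) \<and> closed (s ` Kj p)"
    and cover: "K \<subseteq> (\<Union>p\<in>P. Kj p)"
    and F: "F \<subseteq> {x. s x = v}" and folner: "folner gm gi K \<delta> F"
  shows "\<exists>L. compact L \<and> (\<forall>\<^sub>F w in nhds v. \<exists>F'. F' \<subseteq> L \<inter> {x. s x = w} \<and>
    folner gm gi K ((real (card P) + 1) * \<delta>) F')"
proof -
  have fin: "finite F" using folner by (simp add: folner_def)
  have "\<forall>f. \<exists>U. f \<in> U \<and> s_slice U"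
    using bisection_nhd by blast
  from choice[OF this] obtain U where U: "\<forall>f. f \<in> U f \<and> s_slice (U f)" ..
  obtain C where C: "\<forall>f::'g. compact (C f) \<and> f \<in> interior (C f)"
    using compact_nbhds_within[OF locally_compact, of "\<lambda>_. UNIV"] by auto
  \<comment> \<open>\<open>\<phi> f w\<close> is the point over \<open>w\<close> of a local section of \<open>s\<close> through \<open>f\<close>\<close>
  define \<phi> where "\<phi> f = inv_into (U f) s" for f
  have U_F: "f \<in> U f \<and> s_slice (U f) \<and> s f = v" if "f \<in> F" for f
    using U F that by blast
  have t\<phi>: "(\<phi> f \<longlongrightarrow> f) (nhds v)" if "f \<in> F" for f
    using tendsto_s_slice_inv(1)[of "U f" f] U_F[OF that] by (simp add: \<phi>_def)
  have ev_fiber: "\<forall>\<^sub>F w in nhds v. \<forall>f\<in>F. s (\<phi> f w) = w \<and> \<phi> f w \<in> interior (C f)"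
  proof (rule eventually_ball_finite[OF fin], intro ballI)
    fix f assume f: "f \<in> F"
    have "\<forall>\<^sub>F w in nhds v. \<phi> f w \<in> interior (C f)"
      using topological_tendstoD[OF t\<phi>[OF f] open_interior] C by blast
    moreover have "\<forall>\<^sub>F w in nhds v. w \<in> s ` U f \<and> s (\<phi> f w) = w"
      using tendsto_s_slice_inv(2)[of "U f" f] U_F[OF f] by (simp add: \<phi>_def)
    ultimately show "\<forall>\<^sub>F w in nhds v. s (\<phi> f w) = w \<and> \<phi> f w \<in> interior (C f)"
      by eventually_elim simp
  qed
  have ev_inj: "\<forall>\<^sub>F w in nhds v. inj_on (\<lambda>f. \<phi> f w) F"
    by (rule eventually_inj_on_finite[OF fin]) (simp add: t\<phi>)
  have ev_reflect: "\<forall>\<^sub>F w in nhds v. \<forall>f\<in>F. \<forall>p\<in>P. r (\<phi> f w) \<in> s ` Kj p \<longrightarrow> r f \<in> s ` Kj p"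
    using pieces by (intro eventually_r_reflects_closed[OF fin P _ t\<phi>]) blast+
  have ev_keep: "\<forall>\<^sub>F w in nhds v. \<forall>f\<in>F. \<forall>p\<in>P. (\<exists>k0\<in>Kj p. s k0 = r f \<and> gm k0 f \<in> F) \<longrightarrow>
      (\<forall>k\<in>Kj p. s k = r (\<phi> f w) \<longrightarrow> gm k (\<phi> f w) \<in> (\<lambda>f. \<phi> f w) ` F)"
    unfolding \<phi>_def using pieces U_F by (intro eventually_mult_stays_in_image[OF fin P]) blast+
  show ?thesis
  proof (intro exI conjI)
    show "compact (\<Union>f\<in>F. C f)" using fin C by blast
    show "\<forall>\<^sub>F w in nhds v. \<exists>F'. F' \<subseteq> (\<Union>f\<in>F. C f) \<inter> {x. s x = w} \<and>
      folner gm gi K ((real (card P) + 1) * \<delta>) F'"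
      using ev_fiber ev_inj ev_reflect ev_keep
    proof eventually_elim
      case (elim w)
      have "folner gm gi K ((real (card P) + 1) * \<delta>) ((\<lambda>f. \<phi> f w) ` F)"
      proof (rule folner_image[OF P folner elim(2) _ cover])
        show "Kj p \<subseteq> K \<and> inj_on s (Kj p) \<and> inj_on r (Kj p)" if "p \<in> P" for p
          using pieces[OF that] inj_on_subset by (auto simp: s_slice_def)
        show "r f \<in> s ` Kj p" if "f \<in> F" "p \<in> P" "k \<in> Kj p" "s k = r (\<phi> f w)" for f p k
          using that(1,2) elim(3) image_eqI[of _ s k, OF that(4)[symmetric] that(3)] by blast
        show "gm k (\<phi> f w) \<in> (\<lambda>f. \<phi> f w) ` F"
          if "f \<in> F" "p \<in> P" "k \<in> Kj p" "s k = r (\<phi> f w)" "k0 \<in> Kj p" "s k0 = r f" "gm k0 f \<in> F"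
          for f p k k0
          using that elim(4) by blast
      qed
      moreover have "(\<lambda>f. \<phi> f w) ` F \<subseteq> (\<Union>f\<in>F. C f) \<inter> {x. s x = w}"
        using elim(1) interior_subset by blast
      ultimately show ?case by blast
    qed
  qed
qed

lemma eventually_folner_nearby_fibers_uniform:
  assumes K: "compact K"
  shows "\<exists>M>0. \<forall>F v \<delta>. F \<subseteq> {x. s x = v} \<longrightarrow> folner gm gi K \<delta> F \<longrightarrow>
    (\<exists>L. compact L \<and> (\<forall>\<^sub>F w in nhds v. \<exists>F'. F' \<subseteq> L \<inter> {x. s x = w} \<and> folner gm gi K (M * \<delta>) F'))"
proof -
  have "\<forall>p. \<exists>B. p \<in> B \<and> s_slice B \<and> inj_on r B"
    using bisection_nhd by blast
  from choice[OF this] obtain B where B: "\<forall>p. p \<in> B p \<and> s_slice (B p) \<and> inj_on r (B p)" ..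
  obtain C where C: "\<forall>p. compact (C p) \<and> p \<in> interior (C p) \<and> C p \<subseteq> B p"
    using compact_nbhds_within[OF locally_compact, of B] B by (auto simp: s_slice_def)
  obtain P where P: "P \<subseteq> K" "finite P" "K \<subseteq> (\<Union>p\<in>P. interior (C p))"
    using compactE_image[OF K, of K "\<lambda>p. interior (C p)"] C by blast
  define Kj where "Kj p = K \<inter> C p" for p
  have pieces: "Kj p \<subseteq> K \<and> Kj p \<subseteq> B p \<and> s_slice (B p) \<and> inj_on r (B p) \<and> closed (s ` Kj p)" for p
  proof -
    have "compact (Kj p)"
      unfolding Kj_def using K C by (simp add: compact_Int)
    hence "compact (s ` Kj p)"
      by (rule compact_continuous_image[OF continuous_on_subset[OF continuous_on_s], rotated]) simp
    thus ?thesis using B C by (auto simp: Kj_def intro: compact_imp_closed)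
  qed
  have cover: "K \<subseteq> (\<Union>p\<in>P. Kj p)"
    using P(3) interior_subset by (fastforce simp: Kj_def)
  show ?thesis
    using eventually_folner_nearby_fibers[OF P(2) pieces cover]
    by (intro exI[of _ "real (card P) + 1"]) auto
qed

lemma minimal_reaches_open:
  assumes min: "minimal_groupoid gm gi" and V: "open V" "v \<in> V" "v \<in> units gm gi"
    and u: "u \<in> units gm gi"
  shows "\<exists>g. s g = u \<and> r g \<in> V"
proof -
  define S where "S = s ` (r -` V)"
  define D where "D = units gm gi - S"
  have "open S"
    unfolding S_def by (rule open_s_image[OF open_vimage[OF V(1) continuous_on_r]])
  hence closed: "closedin (top_of_set (units gm gi)) D"
    unfolding closedin_closed D_def by (intro exI[of _ "- S"]) (simp add: closed_Compl Diff_eq)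
  have invariant: "r ` {x. s x \<in> D} = D"
  proof (rule equalityI)
    show "r ` {x. s x \<in> D} \<subseteq> D"
    proof (rule image_subsetI)
      fix x assume "x \<in> {x. s x \<in> D}"
      hence x: "s x \<in> D" by simp
      have "r x \<notin> S"
      proof (rule notI)
        assume "r x \<in> S"
        then obtain g where g: "r x = s g" "g \<in> r -` V"
          unfolding S_def by (rule imageE)
        hence "s x = s (gm g x)" "gm g x \<in> r -` V" by (simp_all add: s_mult r_mult)
        hence "s x \<in> S" unfolding S_def by (rule image_eqI)
        thus False using x by (simp add: D_def)
      qed
      thus "r x \<in> D" by (simp add: D_def units_iff)
    qed
    show "D \<subseteq> r ` {x. s x \<in> D}"
    proof (rule subsetI)
      fix z assume z: "z \<in> D"
      hence "r z = z" "s z \<in> D" using units_iff s_unit by (auto simp: D_def)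
      thus "z \<in> r ` {x. s x \<in> D}" by (intro image_eqI[of z r z]) simp_all
    qed
  qed
  have "D = {} \<or> D = units gm gi"
    using min closed invariant unfolding minimal_groupoid_def by simp
  moreover have "v \<in> S"
    unfolding S_def using V(2,3) units_iff s_unit by (intro image_eqI[of v s v]) simp_all
  ultimately have "u \<in> S" using u V(3) by (auto simp: D_def)
  thus ?thesis by (auto simp: S_def)
qed

lemma compact_transversal:
  assumes min: "minimal_groupoid gm gi" and V: "open V" "v \<in> V" "v \<in> units gm gi"
    and S: "compact S" "S \<subseteq> units gm gi"
  shows "\<exists>C. compact C \<and> (\<forall>u\<in>S. \<exists>g\<in>C. s g = u \<and> r g \<in> V)"
proof -
  obtain C where C: "\<forall>g::'g. compact (C g) \<and> g \<in> interior (C g)"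
    using compact_nbhds_within[OF locally_compact, of "\<lambda>_. UNIV"] by auto
  define W where "W g = s ` (interior (C g) \<inter> r -` V)" for g
  have open_W: "open (W g)" if "g \<in> {g. r g \<in> V}" for g
    unfolding W_def using open_vimage[OF V(1) continuous_on_r]
    by (intro open_s_image open_Int) simp_all
  have cover: "S \<subseteq> (\<Union>g\<in>{g. r g \<in> V}. W g)"
  proof
    fix u assume "u \<in> S"
    then obtain g where g: "s g = u" "r g \<in> V"
      using minimal_reaches_open[OF min V] S(2) by blast
    hence "u \<in> W g"
      unfolding W_def using C by (intro image_eqI[of u s g]) simp_all
    thus "u \<in> (\<Union>g\<in>{g. r g \<in> V}. W g)"
      using g(2) by blast
  qed
  obtain G where G: "G \<subseteq> {g. r g \<in> V}" "finite G" "S \<subseteq> (\<Union>g\<in>G. W g)"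
    by (rule compactE_image[OF S(1) open_W cover])
  have "compact (\<Union>g\<in>G. C g)"
    using G(2) C by blast
  moreover have "\<exists>h\<in>(\<Union>g\<in>G. C g). s h = u \<and> r h \<in> V" if "u \<in> S" for u
  proof -
    obtain g h where "g \<in> G" "h \<in> interior (C g)" "r h \<in> V" "u = s h"
      using G(3) \<open>u \<in> S\<close> unfolding W_def by blast
    thus ?thesis using interior_subset by blast
  qed
  ultimately show ?thesis by blast
qed

lemma compact_setprod:
  assumes "compact A" "compact B"
  shows "compact (setprod gm gi A B)"
proof -
  let ?AB = "(A \<times> B) \<inter> {p. s (fst p) = r (snd p)}"
  have "closed {p :: 'g \<times> 'g. s (fst p) = r (snd p)}"
    by (rule closed_Collect_eq) (auto intro!: continuous_on_compose2[OF continuous_on_s]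
      continuous_on_compose2[OF continuous_on_r] continuous_intros)
  hence "compact ?AB"
    using assms by (intro compact_Int_closed compact_Times)
  moreover have "continuous_on ?AB (\<lambda>p. gm (fst p) (snd p))"
    by (rule continuous_on_subset[OF continuous_on_mult]) (auto simp: G2_iff)
  moreover have "setprod gm gi A B = (\<lambda>p. gm (fst p) (snd p)) ` ?AB"
  proof
    show "setprod gm gi A B \<subseteq> (\<lambda>p. gm (fst p) (snd p)) ` ?AB"
      unfolding setprod_def by (force intro: rev_image_eqI)
    show "(\<lambda>p. gm (fst p) (snd p)) ` ?AB \<subseteq> setprod gm gi A B"
    proof
      fix z assume "z \<in> (\<lambda>p. gm (fst p) (snd p)) ` ?AB"
      then obtain a b where "a \<in> A" "b \<in> B" "s a = r b" "z = gm a b" by auto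
      thus "z \<in> setprod gm gi A B" unfolding setprod_def by blast
    qed
  qed
  ultimately show ?thesis
    using compact_continuous_image by simp
qed

lemma folner_singleton_unit:
  assumes "u \<in> units gm gi" "u \<notin> s ` K" "\<epsilon> \<ge> 0"
  shows "folner gm gi K \<epsilon> {u}"
proof -
  have "bdry gm gi K {u} = {}"
    using assms(1,2) unfolding bdry_def setprod_def by (auto simp: units_iff)
  thus ?thesis using assms(3) by (simp add: folner_def)
qed

lemma ubiquitous_folner_from_open_set:
  assumes min: "minimal_groupoid gm gi" and K: "compact K" and "\<epsilon> \<ge> 0" and L0: "compact L0"
    and V: "open V" "v \<in> V" "v \<in> units gm gi"
    and near: "\<And>w. w \<in> V \<Longrightarrow> \<exists>F'. F' \<subseteq> L0 \<inter> {x. s x = w} \<and> folner gm gi K \<epsilon> F'"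
  shows "\<exists>L. compact L \<and> (\<forall>u\<in>units gm gi. \<exists>F. F \<subseteq> {x \<in> L. s x = u} \<union> {u} \<and> folner gm gi K \<epsilon> F)"
proof -
  have "compact (s ` K)"
    using compact_continuous_image[OF continuous_on_subset[OF continuous_on_s] K] by simp
  moreover have "s ` K \<subseteq> units gm gi"
    using s_in_units by blast
  ultimately obtain C where C: "compact C" "\<forall>u\<in>s ` K. \<exists>g\<in>C. s g = u \<and> r g \<in> V"
    using compact_transversal[OF min V] by blast
  show ?thesis
  proof (rule exI[of _ "setprod gm gi L0 C"], intro conjI ballI)
    show "compact (setprod gm gi L0 C)" using compact_setprod[OF L0 C(1)] .
    fix u assume u: "u \<in> units gm gi"
    show "\<exists>F. F \<subseteq> {x \<in> setprod gm gi L0 C. s x = u} \<union> {u} \<and> folner gm gi K \<epsilon> F"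
    proof (cases "u \<in> s ` K")
      case False
      thus ?thesis using folner_singleton_unit[OF u False] \<open>\<epsilon> \<ge> 0\<close> by auto
    next
      case True
      then obtain g where g: "g \<in> C" "s g = u" "r g \<in> V" using C(2) by blast
      then obtain F' where F': "F' \<subseteq> L0 \<inter> {x. s x = r g}" "folner gm gi K \<epsilon> F'"
        using near by blast
      have "folner gm gi K \<epsilon> ((\<lambda>x. gm x g) ` F')"
        using folner_mult_right F' by blast
      moreover have "(\<lambda>x. gm x g) ` F' \<subseteq> {x \<in> setprod gm gi L0 C. s x = u}"
        using F'(1) g(1,2) by (auto simp: setprod_def s_mult)
      ultimately show ?thesis by blast
    qed
  qed
qed

lemma ubiq_fiberwise_amenable_if_fiberwise_amenable:
  assumes min: "minimal_groupoid gm gi" and amenable: "fiberwise_amenable gm gi"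
  shows "ubiq_fiberwise_amenable gm gi"
  unfolding ubiq_fiberwise_amenable_def
proof (intro allI impI, elim conjE)
  fix K :: "'g set" and \<epsilon> :: real assume K: "compact K" and \<epsilon>: "\<epsilon> > 0"
  obtain M where M: "M > 0" and spread: "\<And>F v \<delta>. F \<subseteq> {x. s x = v} \<Longrightarrow> folner gm gi K \<delta> F \<Longrightarrow>
    \<exists>L. compact L \<and> (\<forall>\<^sub>F w in nhds v. \<exists>F'. F' \<subseteq> L \<inter> {x. s x = w} \<and> folner gm gi K (M * \<delta>) F')"
    using eventually_folner_nearby_fibers_uniform[OF K] by blast
  have "\<epsilon> / M > 0" using \<epsilon> M by simp
  then obtain F0 where "folner gm gi K (\<epsilon> / M) F0"
    using amenable K unfolding fiberwise_amenable_def by blast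
  then obtain v where F: "folner gm gi K (\<epsilon> / M) (F0 \<inter> {x. s x = v})"
    using folner_Int_fiber \<open>\<epsilon> / M > 0\<close> less_imp_le by blast
  obtain L0 where L0: "compact L0"
    and "\<forall>\<^sub>F w in nhds v. \<exists>F'. F' \<subseteq> L0 \<inter> {x. s x = w} \<and> folner gm gi K \<epsilon> F'"
    using spread[OF Int_lower2[of F0 "{x. s x = v}"] F] M by auto
  then obtain V where V: "open V" "v \<in> V"
    and near: "\<And>w. w \<in> V \<Longrightarrow> \<exists>F'. F' \<subseteq> L0 \<inter> {x. s x = w} \<and> folner gm gi K \<epsilon> F'"
    unfolding eventually_nhds by blast
  obtain f where "s f = v"
    using F unfolding folner_def by blast
  hence "v \<in> units gm gi"
    using s_in_units by blast
  thus "\<exists>L. compact L \<and> (\<forall>u\<in>units gm gi. \<exists>F. F \<subseteq> {x \<in> L. s x = u} \<union> {u} \<and> folner gm gi K \<epsilon> F)"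
    using ubiquitous_folner_from_open_set[OF min K _ L0 V] near \<epsilon> by simp
qed

end

lemma fiberwise_amenable_if_ubiq_fiberwise_amenable:
  fixes gm :: "'g::topological_space \<Rightarrow> 'g \<Rightarrow> 'g" and gi :: "'g \<Rightarrow> 'g"
  assumes "ubiq_fiberwise_amenable gm gi"
  shows "fiberwise_amenable gm gi"
  unfolding fiberwise_amenable_def
proof (intro allI impI)
  fix K :: "'g set" and \<epsilon> :: real assume "compact K \<and> \<epsilon> > 0"
  moreover have "grd_r gm gi x \<in> units gm gi" for x by (simp add: units_def)
  ultimately show "\<exists>F. folner gm gi K \<epsilon> F"
    using assms unfolding ubiq_fiberwise_amenable_def by blast
qed

theorem theorem4p01:
  fixes G2 :: "('g::t2_space \<times> 'g) set" and gm :: "'g \<Rightarrow> 'g \<Rightarrow> 'g" and gi :: "'g \<Rightarrow> 'g"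
  assumes "etale_groupoid G2 gm gi"
    and "locally_compact_type TYPE('g)"
    and "sigma_compact_type TYPE('g)"
    and "minimal_groupoid gm gi"
  shows "fiberwise_amenable gm gi \<longleftrightarrow> ubiq_fiberwise_amenable gm gi"
proof -
  interpret etale_grpd G2 gm gi
    using assms(1,2) by unfold_locales (simp_all add: etale_groupoid_def)
  show ?thesis
    using ubiq_fiberwise_amenable_if_fiberwise_amenable[OF assms(4)]
      fiberwise_amenable_if_ubiq_fiberwise_amenable by blast
qed

end
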